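(* Let $(X,\leq)$ be a poset and $K$ a field, and let $\mathcal{U}_1=\{\alpha\in FI(X,K)\mid \alpha_{xx}=1\text{ for all }x\in X\}$. The following are equivalent: (1) $\mathcal{U}_1$ is solvable; (2) $\mathcal{U}_1$ is nilpotent; (3) $X$ is bounded. Moreover, in this case $\mathcal{U}_1$ has nilpotency class $l(X)$ and derived length $\lceil\log_2(l(X)+1)\rceil$.
   Context: $FI(X,K)$ is the finitary incidence algebra: the $K$-vector space of formal sums $\alpha=\sum_{x\leq y}\alpha_{xy}e_{xy}$ ($x,y\in X$, $\alpha_{xy}\in K$) such that for every pair $x<y$ only finitely many $x\leq u<v\leq y$ have $\alpha_{uv}\neq0$, with convolution product $\alpha\beta=\sum_{x\leq y}\big(\sum_{x\leq z\leq y}\alpha_{xz}\beta_{zy}\big)e_{xy}$ and identity $\delta=\sum_{x}e_{xx}$. $\mathcal{U}_1=\delta+J(FI(X,K))$ is a subgroup of the group of units. The length $l(X)$ is the supremum of $|C|-1$ over finite chains $C\subseteq X$; $X$ is bounded if $l(X)<\infty$. $\lceil t\rceil$ is the ceiling. *)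

theory Defs
  imports Complex_Main "HOL-Algebra.Solvable_Groups" "HOL-Library.Extended_Nat"
begin

text \<open>Finitary incidence algebra FI(X,K) of a poset X (the type 'a with its order)
  over a field K (the type 'k).\<close>

definition FI :: "('a::order \<Rightarrow> 'a \<Rightarrow> 'k::field) set" where
  "FI = {a. (\<forall>x y. \<not> x \<le> y \<longrightarrow> a x y = 0) \<and>
            (\<forall>x y. x < y \<longrightarrow> finite {(u, v). x \<le> u \<and> u < v \<and> v \<le> y \<and> a u v \<noteq> 0})}"

text \<open>Convolution product. The sum is over the (for elements of FI finite) set of
  z in [x,y] with a nonzero summand, which equals the formal sum over x <= z <= y.\<close>

definition fi_mult :: "('a::order \<Rightarrow> 'a \<Rightarrow> 'k::field) \<Rightarrow> ('a \<Rightarrow> 'a \<Rightarrow> 'k) \<Rightarrow> ('a \<Rightarrow> 'a \<Rightarrow> 'k)" where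
  "fi_mult a b = (\<lambda>x y. if x \<le> y
      then (\<Sum>z\<in>{z. x \<le> z \<and> z \<le> y \<and> a x z * b z y \<noteq> 0}. a x z * b z y) else 0)"

definition fi_delta :: "'a::order \<Rightarrow> 'a \<Rightarrow> 'k::field" where
  "fi_delta = (\<lambda>x y. if x = y then 1 else 0)"

definition U1 :: "('a::order \<Rightarrow> 'a \<Rightarrow> 'k::field) monoid" where
  "U1 = \<lparr> carrier = {a \<in> FI. \<forall>x. a x x = 1}, monoid.mult = fi_mult, one = fi_delta \<rparr>"

text \<open>Lower central series, 0-indexed: lcs G 0 = G, lcs G (n+1) = [lcs G n, G].\<close>

fun lcs :: "('g, 'b) monoid_scheme \<Rightarrow> nat \<Rightarrow> 'g set" where
  "lcs G 0 = carrier G"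
| "lcs G (Suc n) = generate G (\<Union>h \<in> lcs G n. \<Union>g \<in> carrier G.
      {h \<otimes>\<^bsub>G\<^esub> g \<otimes>\<^bsub>G\<^esub> inv\<^bsub>G\<^esub> h \<otimes>\<^bsub>G\<^esub> inv\<^bsub>G\<^esub> g})"

definition nilpotent_group :: "('g, 'b) monoid_scheme \<Rightarrow> bool" where
  "nilpotent_group G \<longleftrightarrow> (\<exists>n. lcs G n = {\<one>\<^bsub>G\<^esub>})"

definition nilpotency_class :: "('g, 'b) monoid_scheme \<Rightarrow> nat" where
  "nilpotency_class G = (LEAST n. lcs G n = {\<one>\<^bsub>G\<^esub>})"

definition derived_length :: "('g, 'b) monoid_scheme \<Rightarrow> nat" where
  "derived_length G = (LEAST n. (derived G ^^ n) (carrier G) = {\<one>\<^bsub>G\<^esub>})"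

definition poset_length :: "'a::order itself \<Rightarrow> enat" where
  "poset_length _ = Sup {enat (card C - 1) | C :: 'a set.
      finite C \<and> C \<noteq> {} \<and> Complete_Partial_Order.chain (\<le>) C}"

end

theory Submission
  imports Defs
begin

text \<open>Let \<Gamma>_k = U1_level k consist of the elements whose nonzero off-diagonal entries sit
  at pairs x < y joined by a strict chain x = z_0 < ... < z_k = y. For k \<ge> 1 each \<Gamma>_k is a
  subgroup, \<Gamma>_1 = U_1 and [\<Gamma>_i, \<Gamma>_j] \<subseteq> \<Gamma>_(i+j); hence \<gamma>_(n+1)(U_1) \<subseteq> \<Gamma>_(n+1)
  and U_1^(n) \<subseteq> \<Gamma>_(2^n), and \<Gamma>_k is trivial when X has no chain of length k. Conversely,
  the transvections satisfy [\<delta> + a e_xy, \<delta> + b e_yz] = \<delta> + ab e_xz, so by induction along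
  a chain of length n + 1 (resp. 2^n) a nontrivial transvection lies in \<gamma>_(n+1)(U_1)
  (resp. U_1^(n)). Thus \<gamma>_(n+1)(U_1) = 1 iff l(X) \<le> n, and U_1^(n) = 1 iff l(X) < 2^n.\<close>

lemma int_Least_less_power2_eq_ceiling_log:
  "int (LEAST n. L < 2 ^ n) = \<lceil>log 2 (real (L + 1))\<rceil>"
proof -
  define d where "d = (LEAST n. L < 2 ^ n)"
  have "L < 2 ^ d"
    unfolding d_def by (rule LeastI[of _ L]) (rule less_exp)
  show ?thesis
  proof (cases d)
    case 0
    with \<open>L < 2 ^ d\<close> show ?thesis by (simp add: d_def)
  next
    case (Suc m)
    then have "2 ^ m \<le> L"
      using not_less_Least[of m "\<lambda>n. L < 2 ^ n"] by (simp add: d_def)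
    with \<open>L < 2 ^ d\<close> Suc have "\<lceil>log (real 2) (real (L + 1))\<rceil> = int m + 1"
      by (intro ceiling_log_nat_eq_if) auto
    with Suc show ?thesis by (simp add: d_def)
  qed
qed

lemma (in group) one_in_lcs: "\<one> \<in> lcs G n"
  by (cases n) (auto intro: generate.one)

section \<open>The finitary incidence algebra and the group U_1\<close>

definition fi_support :: "('a::order \<Rightarrow> 'a \<Rightarrow> 'k::field) \<Rightarrow> 'a \<Rightarrow> 'a \<Rightarrow> ('a \<times> 'a) set" where
  "fi_support a x y = {(u, v). x \<le> u \<and> u < v \<and> v \<le> y \<and> a u v \<noteq> 0}"

lemma FI_iff:
  "a \<in> FI \<longleftrightarrow> (\<forall>x y. \<not> x \<le> y \<longrightarrow> a x y = 0) \<and> (\<forall>x y. x < y \<longrightarrow> finite (fi_support a x y))"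
  unfolding FI_def fi_support_def by simp

lemma FI_eq_0: "a \<in> FI \<Longrightarrow> \<not> x \<le> y \<Longrightarrow> a x y = 0"
  unfolding FI_def by auto

lemma finite_fi_support: "a \<in> FI \<Longrightarrow> finite (fi_support a x y)"
proof (cases "x < y")
  case False
  then have "fi_support a x y = {}"
    unfolding fi_support_def by (auto dest: le_less_trans less_le_trans)
  then show ?thesis by simp
qed (simp add: FI_iff)

lemma fi_support_mono: "x \<le> x' \<Longrightarrow> y' \<le> y \<Longrightarrow> fi_support a x' y' \<subseteq> fi_support a x y"
  unfolding fi_support_def by (auto intro: order_trans)

lemma fi_support_psubset:
  assumes "x \<le> z" "z < y" "a z y \<noteq> 0"
  shows "fi_support a x z \<subset> fi_support a x y"
proof
  show "fi_support a x z \<subseteq> fi_support a x y"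
    using assms by (intro fi_support_mono) auto
  have "(z, y) \<in> fi_support a x y" "(z, y) \<notin> fi_support a x z"
    using assms unfolding fi_support_def by auto
  then show "fi_support a x z \<noteq> fi_support a x y" by blast
qed

lemma fi_mult_eq_sum:
  assumes "a \<in> FI" "b \<in> FI" "finite F"
    and "\<And>z. x \<le> z \<Longrightarrow> z \<le> y \<Longrightarrow> a x z * b z y \<noteq> 0 \<Longrightarrow> z \<in> F"
  shows "fi_mult a b x y = (\<Sum>z\<in>F. a x z * b z y)"
proof -
  let ?Z = "{z. x \<le> z \<and> z \<le> y \<and> a x z * b z y \<noteq> 0}"
  have "fi_mult a b x y = (\<Sum>z\<in>?Z. a x z * b z y)"
  proof (cases "x \<le> y")
    case False
    then have "?Z = {}" by (auto dest: order_trans)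
    then show ?thesis using False by (simp only: fi_mult_def if_False sum.empty)
  qed (simp add: fi_mult_def)
  also have "\<dots> = (\<Sum>z\<in>F. a x z * b z y)"
  proof (rule sum.mono_neutral_left)
    show "\<forall>z\<in>F - ?Z. a x z * b z y = 0"
      using FI_eq_0[OF assms(1), of x] FI_eq_0[OF assms(2), of _ y] by auto
  qed (use assms in auto)
  finally show ?thesis .
qed

lemma fi_mult_neq_0E:
  assumes "fi_mult a b x y \<noteq> 0"
  obtains z where "x \<le> z" "z \<le> y" "a x z \<noteq> 0" "b z y \<noteq> 0"
  using assms unfolding fi_mult_def
  by (auto split: if_splits elim: sum.not_neutral_contains_not_neutral)

lemma fi_mult_in_FI:
  assumes a: "a \<in> FI" and b: "b \<in> FI"
  shows "fi_mult a b \<in> FI"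
  unfolding FI_iff
proof safe
  fix x y :: 'a
  show "\<not> x \<le> y \<Longrightarrow> fi_mult a b x y = 0"
    unfolding fi_mult_def by simp
  let ?A = "fi_support a x y" and ?B = "fi_support b x y"
  have "fi_support (fi_mult a b) x y \<subseteq> ?A \<union> ?B \<union> fst ` ?A \<times> snd ` ?B"
  proof safe
    fix u v assume uv: "(u, v) \<in> fi_support (fi_mult a b) x y" "(u, v) \<notin> ?A" "(u, v) \<notin> ?B"
    then have "fi_mult a b u v \<noteq> 0" unfolding fi_support_def by simp
    then obtain z where z: "u \<le> z" "z \<le> v" "a u z \<noteq> 0" "b z v \<noteq> 0"
      by (rule fi_mult_neq_0E)
    have "z \<noteq> u" "z \<noteq> v"
      using uv z a b by (auto simp: fi_support_def)
    then have "(u, z) \<in> ?A" "(z, v) \<in> ?B"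
      using uv z unfolding fi_support_def by (auto intro: order_trans)
    then show "u \<in> fst ` ?A" "v \<in> snd ` ?B" by force+
  qed
  then show "finite (fi_support (fi_mult a b) x y)"
    by (rule finite_subset) (simp add: finite_fi_support a b)
qed

lemma fi_mult_eq_sum_left_support:
  assumes "a \<in> FI" "b \<in> FI" "finite F" "x \<in> F" "snd ` fi_support a x y \<subseteq> F" "w \<le> y"
  shows "fi_mult a b x w = (\<Sum>z\<in>F. a x z * b z w)"
proof (rule fi_mult_eq_sum[OF assms(1-3)])
  fix z assume z: "x \<le> z" "z \<le> w" "a x z * b z w \<noteq> 0"
  show "z \<in> F"
  proof (cases "z = x")
    case False
    with z \<open>w \<le> y\<close> have "(x, z) \<in> fi_support a x y"
      unfolding fi_support_def by (auto intro: order_trans)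
    then show ?thesis using assms(5) by force
  qed (simp add: assms(4))
qed

lemma fi_mult_eq_sum_right_support:
  assumes "a \<in> FI" "b \<in> FI" "finite F" "y \<in> F" "fst ` fi_support b x y \<subseteq> F" "x \<le> u"
  shows "fi_mult a b u y = (\<Sum>z\<in>F. a u z * b z y)"
proof (rule fi_mult_eq_sum[OF assms(1-3)])
  fix z assume z: "u \<le> z" "z \<le> y" "a u z * b z y \<noteq> 0"
  show "z \<in> F"
  proof (cases "z = y")
    case False
    with z \<open>x \<le> u\<close> have "(z, y) \<in> fi_support b x y"
      unfolding fi_support_def by (auto intro: order_trans)
    then show ?thesis using assms(5) by force
  qed (simp add: assms(4))
qed

lemma fi_mult_assoc:
  assumes a: "a \<in> FI" and b: "b \<in> FI" and c: "c \<in> FI"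
  shows "fi_mult (fi_mult a b) c = fi_mult a (fi_mult b c)"
proof (intro ext)
  fix x y
  \<comment> \<open>P contains every point of [x, y] touched by the supports of a, b and c, so all four
      convolutions below are sums over the same finite set.\<close>
  define S where "S = fi_support a x y \<union> fi_support b x y \<union> fi_support c x y"
  define P where "P = {x, y} \<union> fst ` S \<union> snd ` S"
  have P: "finite P" "x \<in> P" "y \<in> P"
    "snd ` fi_support a x y \<subseteq> P" "fst ` fi_support c x y \<subseteq> P"
    unfolding P_def S_def by (auto simp: finite_fi_support a b c)
  have "fi_mult (fi_mult a b) c x y = (\<Sum>w\<in>P. fi_mult a b x w * c w y)"
    using P by (intro fi_mult_eq_sum_right_support fi_mult_in_FI a b c) auto
  also have "\<dots> = (\<Sum>w\<in>P. (\<Sum>z\<in>P. a x z * b z w) * c w y)"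
  proof (rule sum.cong[OF refl])
    fix w
    show "fi_mult a b x w * c w y = (\<Sum>z\<in>P. a x z * b z w) * c w y"
      by (cases "w \<le> y") (simp_all add: FI_eq_0[OF c] fi_mult_eq_sum_left_support[OF a b P(1,2,4)])
  qed
  also have "\<dots> = (\<Sum>w\<in>P. \<Sum>z\<in>P. a x z * b z w * c w y)"
    by (simp add: sum_distrib_right)
  also have "\<dots> = (\<Sum>z\<in>P. \<Sum>w\<in>P. a x z * b z w * c w y)"
    by (rule sum.swap)
  also have "\<dots> = (\<Sum>z\<in>P. a x z * (\<Sum>w\<in>P. b z w * c w y))"
    by (simp add: sum_distrib_left mult.assoc)
  also have "\<dots> = (\<Sum>z\<in>P. a x z * fi_mult b c z y)"
  proof (rule sum.cong[OF refl])
    fix z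
    show "a x z * (\<Sum>w\<in>P. b z w * c w y) = a x z * fi_mult b c z y"
      by (cases "x \<le> z") (simp_all add: FI_eq_0[OF a] fi_mult_eq_sum_right_support[OF b c P(1,3,5)])
  qed
  also have "\<dots> = fi_mult a (fi_mult b c) x y"
    using P by (intro fi_mult_eq_sum_left_support[symmetric] fi_mult_in_FI a b c) auto
  finally show "fi_mult (fi_mult a b) c x y = fi_mult a (fi_mult b c) x y" .
qed

lemma fi_delta_in_FI: "fi_delta \<in> FI"
  unfolding FI_def fi_delta_def by auto

lemma fi_mult_delta_left: "a \<in> FI \<Longrightarrow> fi_mult fi_delta a = a"
  by (intro ext, subst fi_mult_eq_sum[OF fi_delta_in_FI, of a "{_}"])
    (auto simp: fi_delta_def split: if_splits)

lemma fi_mult_diag: "a \<in> FI \<Longrightarrow> b \<in> FI \<Longrightarrow> fi_mult a b x x = a x x * b x x"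
  by (subst fi_mult_eq_sum[of a b "{x}"]) (auto dest: antisym)

text \<open>The left inverse of an element with unit diagonal: its entries are solved from
  (fi_inv a * a) x y = 0 for x < y, recursing along the finite support of a in [x, y].\<close>

function fi_inv :: "('a::order \<Rightarrow> 'a \<Rightarrow> 'k::field) \<Rightarrow> 'a \<Rightarrow> 'a \<Rightarrow> 'k" where
  "fi_inv a x y = (if x = y then 1 else if a \<in> FI \<and> x < y then
     - (\<Sum>z\<in>{z. x \<le> z \<and> z < y \<and> a z y \<noteq> 0}. fi_inv a x z * a z y) else 0)"
  by auto
termination
proof (relation "measure (\<lambda>(a, x, y). card (fi_support a x y))", simp)
  fix a :: "'a::order \<Rightarrow> 'a \<Rightarrow> 'k::field" and x y z
  assume "a \<in> FI \<and> x < y" "z \<in> {z. x \<le> z \<and> z < y \<and> a z y \<noteq> 0}"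
  then show "((a, x, z), a, x, y) \<in> measure (\<lambda>(a, x, y). card (fi_support a x y))"
    by (simp add: psubset_card_mono finite_fi_support fi_support_psubset)
qed

declare fi_inv.simps[simp del]

lemma fi_inv_diag [simp]: "fi_inv a x x = 1"
  by (simp add: fi_inv.simps[of a x x])

lemma fi_inv_neq_0_right:
  assumes "fi_inv a x y \<noteq> 0" "x \<noteq> y"
  obtains w where "x \<le> w" "w < y" "a w y \<noteq> 0"
proof -
  have "a \<in> FI \<and> x < y"
    using assms by (auto simp: fi_inv.simps[of a x y] split: if_splits)
  with assms have "(\<Sum>z\<in>{z. x \<le> z \<and> z < y \<and> a z y \<noteq> 0}. fi_inv a x z * a z y) \<noteq> 0"
    by (simp add: fi_inv.simps[of a x y])
  then show thesis
    by (rule sum.not_neutral_contains_not_neutral) (auto intro: that)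
qed

lemma fi_inv_neq_0_left:
  "fi_inv a x y \<noteq> 0 \<Longrightarrow> x \<noteq> y \<Longrightarrow> \<exists>w. x < w \<and> w \<le> y \<and> a x w \<noteq> 0"
proof (induction a x y rule: fi_inv.induct)
  case (1 a x y)
  then have a: "a \<in> FI" "x < y"
    by (auto simp: fi_inv.simps[of a x y] split: if_splits)
  with 1 have "(\<Sum>z\<in>{z. x \<le> z \<and> z < y \<and> a z y \<noteq> 0}. fi_inv a x z * a z y) \<noteq> 0"
    by (simp add: fi_inv.simps[of a x y])
  then obtain z where z: "x \<le> z" "z < y" "a z y \<noteq> 0" "fi_inv a x z \<noteq> 0"
    by (rule sum.not_neutral_contains_not_neutral) auto
  show ?case
  proof (cases "z = x")
    case True
    with z a show ?thesis by auto
  next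
    case False
    with 1 a z obtain w where "x < w" "w \<le> z" "a x w \<noteq> 0" by auto
    with z show ?thesis by (auto intro: order_trans)
  qed
qed

lemma fi_inv_in_FI:
  assumes a: "a \<in> FI"
  shows "fi_inv a \<in> FI"
  unfolding FI_iff
proof safe
  fix x y :: 'a
  show "\<not> x \<le> y \<Longrightarrow> fi_inv a x y = 0"
    by (auto simp: fi_inv.simps[of a x y])
  let ?S = "fi_support a x y"
  have "fi_support (fi_inv a) x y \<subseteq> fst ` ?S \<times> snd ` ?S"
  proof safe
    fix u v assume "(u, v) \<in> fi_support (fi_inv a) x y"
    then have uv: "x \<le> u" "u < v" "v \<le> y" "fi_inv a u v \<noteq> 0"
      unfolding fi_support_def by auto
    obtain w where w: "u < w" "w \<le> v" "a u w \<noteq> 0"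
      using fi_inv_neq_0_left[OF uv(4)] uv(2) by auto
    obtain w' where w': "u \<le> w'" "w' < v" "a w' v \<noteq> 0"
      using fi_inv_neq_0_right[OF uv(4)] uv(2) by auto
    have "(u, w) \<in> ?S" "(w', v) \<in> ?S"
      using w w' uv unfolding fi_support_def by (auto intro: order_trans)
    then show "u \<in> fst ` ?S" "v \<in> snd ` ?S" by force+
  qed
  then show "finite (fi_support (fi_inv a) x y)"
    by (rule finite_subset) (simp add: finite_fi_support a)
qed

lemma fi_mult_fi_inv:
  assumes a: "a \<in> FI" and diag: "\<And>x. a x x = 1"
  shows "fi_mult (fi_inv a) a = fi_delta"
proof (intro ext)
  fix x y :: 'a
  have inv: "fi_inv a \<in> FI" using fi_inv_in_FI[OF a] .
  consider "x = y" | "x < y" | "\<not> x \<le> y"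
    using order.order_iff_strict by blast
  then show "fi_mult (fi_inv a) a x y = fi_delta x y"
  proof cases
    case 1
    then show ?thesis by (simp add: fi_mult_diag[OF inv a] diag fi_delta_def)
  next
    case 2
    define Z where "Z = {z. x \<le> z \<and> z < y \<and> a z y \<noteq> 0}"
    have "finite Z"
      by (rule finite_subset[OF _ finite_imageI[OF finite_fi_support[OF a]]])
        (force simp: Z_def fi_support_def)
    then have "fi_mult (fi_inv a) a x y = (\<Sum>z\<in>insert y Z. fi_inv a x z * a z y)"
      by (intro fi_mult_eq_sum[OF inv a]) (auto simp: Z_def)
    also have "\<dots> = fi_inv a x y + (\<Sum>z\<in>Z. fi_inv a x z * a z y)"
      using \<open>finite Z\<close> diag by (simp add: Z_def)
    also have "\<dots> = 0"
      using 2 a by (simp add: fi_inv.simps[of a x y] Z_def)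
    finally show ?thesis
      using 2 by (simp add: fi_delta_def)
  next
    case 3
    then show ?thesis by (simp add: fi_mult_def fi_delta_def)
  qed
qed

lemma U1_carrier_iff [simp]: "a \<in> carrier U1 \<longleftrightarrow> a \<in> FI \<and> (\<forall>x. a x x = 1)"
  unfolding U1_def by simp

lemma U1_mult [simp]: "a \<otimes>\<^bsub>U1\<^esub> b = fi_mult a b"
  unfolding U1_def by simp

lemma U1_one [simp]: "\<one>\<^bsub>U1\<^esub> = fi_delta"
  unfolding U1_def by simp

lemma group_U1: "group U1"
proof (rule groupI)
  fix a b c :: "'a::order \<Rightarrow> 'a \<Rightarrow> 'k::field"
  assume "a \<in> carrier U1" "b \<in> carrier U1" "c \<in> carrier U1"
  then show "a \<otimes>\<^bsub>U1\<^esub> b \<in> carrier U1" "a \<otimes>\<^bsub>U1\<^esub> b \<otimes>\<^bsub>U1\<^esub> c = a \<otimes>\<^bsub>U1\<^esub> (b \<otimes>\<^bsub>U1\<^esub> c)"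
    by (simp_all add: fi_mult_in_FI fi_mult_diag fi_mult_assoc)
  show "\<one>\<^bsub>U1\<^esub> \<otimes>\<^bsub>U1\<^esub> a = a"
    using \<open>a \<in> carrier U1\<close> by (simp add: fi_mult_delta_left)
  show "\<exists>b\<in>carrier U1. b \<otimes>\<^bsub>U1\<^esub> a = \<one>\<^bsub>U1\<^esub>"
  proof
    show "fi_inv a \<in> carrier U1"
      using \<open>a \<in> carrier U1\<close> by (simp add: fi_inv_in_FI)
    show "fi_inv a \<otimes>\<^bsub>U1\<^esub> a = \<one>\<^bsub>U1\<^esub>"
      using \<open>a \<in> carrier U1\<close> by (simp add: fi_mult_fi_inv)
  qed
qed (use fi_delta_in_FI in \<open>simp add: fi_delta_def\<close>)

interpretation U1: group "U1 :: ('a::order \<Rightarrow> 'a \<Rightarrow> 'k::field) monoid"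
  by (rule group_U1)

section \<open>Strict chains and the length of a poset\<close>

fun strict_chain :: "'a::order \<Rightarrow> 'a \<Rightarrow> nat \<Rightarrow> bool" where
  "strict_chain x y 0 \<longleftrightarrow> x = y"
| "strict_chain x y (Suc k) \<longleftrightarrow> (\<exists>z. x < z \<and> strict_chain z y k)"

lemma strict_chain_imp_le: "strict_chain x y k \<Longrightarrow> x \<le> y"
  by (induction k arbitrary: x) (auto dest: less_le_trans intro: less_imp_le)

lemma strict_chain_Suc_imp_less: "strict_chain x y (Suc k) \<Longrightarrow> x < y"
  by (auto dest: strict_chain_imp_le intro: less_le_trans)

lemma strict_chain_imp_less: "strict_chain x y k \<Longrightarrow> 0 < k \<Longrightarrow> x < y"
  using strict_chain_Suc_imp_less by (cases k) auto

lemma strict_chain_1 [simp]: "strict_chain x y 1 \<longleftrightarrow> x < y"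
  by simp

lemma strict_chain_add: "strict_chain x y i \<Longrightarrow> strict_chain y z j \<Longrightarrow> strict_chain x z (i + j)"
  by (induction i arbitrary: x) auto

lemma strict_chain_addE:
  assumes "strict_chain x z (i + j)"
  obtains y where "strict_chain x y i" "strict_chain y z j"
  using assms by (induction i arbitrary: x) auto

lemma strict_chain_shorten:
  assumes "strict_chain x y m" "0 < k" "k \<le> m"
  shows "strict_chain x y k"
  using \<open>k \<le> m\<close>
proof (induction rule: inc_induct)
  case base
  show ?case by fact
next
  case (step n)
  with \<open>0 < k\<close> obtain n' where "n = Suc n'" by (cases n) auto
  with step.IH obtain z w where "x < z" "z < w" "strict_chain w y n'" by auto
  with \<open>n = Suc n'\<close> show ?case by (auto intro: less_trans)
qed

lemma strict_chain_join:
  "strict_chain x z i \<Longrightarrow> strict_chain z y j \<Longrightarrow> 0 < k \<Longrightarrow> k \<le> i + j \<Longrightarrow> strict_chain x y k"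
  by (blast intro: strict_chain_shorten strict_chain_add)

lemma strict_chain_imp_finite_chain:
  assumes "strict_chain x y k"
  shows "\<exists>C. finite C \<and> Complete_Partial_Order.chain (\<le>) C \<and> card C = Suc k \<and> x \<in> C"
proof -
  have "\<exists>C. finite C \<and> Complete_Partial_Order.chain (\<le>) C \<and> card C = Suc k \<and> x \<in> C \<and> (\<forall>c\<in>C. x \<le> c)"
    using assms
  proof (induction k arbitrary: x)
    case 0
    then show ?case by (intro exI[of _ "{x}"]) (simp add: chain_def)
  next
    case (Suc k)
    then obtain z where "x < z" "strict_chain z y k" by auto
    with Suc.IH obtain C where C: "finite C" "Complete_Partial_Order.chain (\<le>) C"
      "card C = Suc k" "\<forall>c\<in>C. z \<le> c"
      by auto
    with \<open>x < z\<close> have below: "\<forall>c\<in>insert x C. x \<le> c" and "x \<notin> C"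
      by (auto dest: less_le_trans)
    have "Complete_Partial_Order.chain (\<le>) (insert x C)"
      using C(2) below unfolding chain_def by blast
    with C below \<open>x \<notin> C\<close> show ?case
      by (intro exI[of _ "insert x C"]) simp
  qed
  then show ?thesis by auto
qed

lemma finite_chain_imp_strict_chain:
  assumes "finite C" "Complete_Partial_Order.chain (\<le>) C" "card C = Suc k"
  shows "\<exists>x\<in>C. \<exists>y. strict_chain x y k"
  using assms
proof (induction k arbitrary: C)
  case 0
  then obtain x where "C = {x}" by (auto simp: card_Suc_eq)
  then show ?case by simp
next
  case (Suc k)
  then have "C \<noteq> {}" by auto
  then obtain m where m: "m \<in> C" "\<forall>c\<in>C. c \<le> m \<longrightarrow> m = c"
    using finite_has_minimal[OF Suc.prems(1)] by blast
  have "finite (C - {m})" "Complete_Partial_Order.chain (\<le>) (C - {m})" "card (C - {m}) = Suc k"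
    using Suc.prems m(1) by (auto intro: chain_subset)
  then obtain x y where x: "x \<in> C - {m}" and "strict_chain x y k"
    using Suc.IH by blast
  moreover have "m < x"
    using m x Suc.prems(2) unfolding chain_def by (metis DiffE order.not_eq_order_implies_strict singletonI)
  ultimately show ?case
    using m(1) by auto
qed

lemma enat_le_poset_length_iff:
  "enat k \<le> poset_length (X :: 'a::order itself) \<longleftrightarrow> (\<exists>x y :: 'a. strict_chain x y k)"
proof
  assume "\<exists>x y :: 'a. strict_chain x y k"
  then obtain C :: "'a set" where "finite C" "Complete_Partial_Order.chain (\<le>) C" "card C = Suc k"
    using strict_chain_imp_finite_chain by blast
  then show "enat k \<le> poset_length X"
    unfolding poset_length_def by (intro Sup_upper) force
next
  assume le: "enat k \<le> poset_length X"
  show "\<exists>x y :: 'a. strict_chain x y k"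
  proof (cases k)
    case (Suc m)
    with le have "enat m < poset_length X"
      by (simp add: Suc_ile_eq)
    then obtain C :: "'a set" where C: "finite C" "Complete_Partial_Order.chain (\<le>) C"
        "enat m < enat (card C - 1)"
      unfolding poset_length_def less_Sup_iff by blast
    then obtain j where "card C = Suc j" "k \<le> j"
      using Suc by (cases "card C") auto
    with C obtain x y :: 'a where "strict_chain x y j"
      using finite_chain_imp_strict_chain by blast
    with \<open>k \<le> j\<close> Suc show ?thesis
      using strict_chain_shorten by blast
  qed simp
qed

section \<open>A filtration of U_1 by chain length\<close>

lemma U1_mult_entry:
  assumes a: "a \<in> carrier U1" and b: "b \<in> carrier U1" and "x < y"
  shows "fi_mult a b x y
    = a x y + b x y + (\<Sum>z | x < z \<and> z < y \<and> a x z * b z y \<noteq> 0. a x z * b z y)"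
proof -
  let ?Z = "{z. x < z \<and> z < y \<and> a x z * b z y \<noteq> 0}"
  have "finite ?Z"
    using a by (intro finite_subset[OF _ finite_imageI[OF finite_fi_support, of a snd x y]])
      (force simp: fi_support_def)+
  then have "fi_mult a b x y = (\<Sum>z\<in>insert x (insert y ?Z). a x z * b z y)"
    using a b by (intro fi_mult_eq_sum) (auto simp: order.order_iff_strict)
  also have "\<dots> = a x y + b x y + (\<Sum>z\<in>?Z. a x z * b z y)"
    using \<open>finite ?Z\<close> \<open>x < y\<close> a b by (simp add: add.commute)
  finally show ?thesis .
qed

text \<open>Since (c d) x y = c x y + d x y + (sum over x < z < y of c x z d z y), a nonzero entry
  c x y at a place where c d and d agree forces c x z \<noteq> 0 and d z y \<noteq> 0 for some x < z < y;
  the induction runs over the finite support of d in [x, y].\<close>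

lemma U1_nonzero_entry_induct:
  assumes c: "c \<in> carrier U1" and d: "d \<in> carrier U1"
    and differ: "\<And>x y. x < y \<Longrightarrow> fi_mult c d x y \<noteq> d x y \<Longrightarrow> Q x y"
    and step: "\<And>x z y. x < z \<Longrightarrow> z < y \<Longrightarrow> Q x z \<Longrightarrow> d z y \<noteq> 0 \<Longrightarrow> Q x y"
    and "x < y" "c x y \<noteq> 0"
  shows "Q x y"
  using \<open>x < y\<close> \<open>c x y \<noteq> 0\<close>
proof (induction "card (fi_support d x y)" arbitrary: y rule: less_induct)
  case less
  show ?case
  proof (rule ccontr)
    assume "\<not> Q x y"
    let ?S = "\<Sum>z | x < z \<and> z < y \<and> c x z * d z y \<noteq> 0. c x z * d z y"
    from \<open>\<not> Q x y\<close> differ less.prems have "fi_mult c d x y = d x y" by auto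
    then have "?S = - c x y"
      using U1_mult_entry[OF c d \<open>x < y\<close>] by (simp add: eq_neg_iff_add_eq_0 add.commute)
    with \<open>c x y \<noteq> 0\<close> have "?S \<noteq> 0" by simp
    then obtain z where z: "x < z" "z < y" "c x z \<noteq> 0" "d z y \<noteq> 0"
      by (rule sum.not_neutral_contains_not_neutral) auto
    have "card (fi_support d x z) < card (fi_support d x y)"
      using z d by (intro psubset_card_mono fi_support_psubset finite_fi_support) auto
    with z less.hyps have "Q x z" by blast
    with z step have "Q x y" by blast
    with \<open>\<not> Q x y\<close> show False by contradiction
  qed
qed

definition U1_level :: "nat \<Rightarrow> ('a::order \<Rightarrow> 'a \<Rightarrow> 'k::field) set" where
  "U1_level k = {a \<in> carrier U1. \<forall>x y. x < y \<longrightarrow> a x y \<noteq> 0 \<longrightarrow> strict_chain x y k}"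

lemma U1_level_Suc_0: "U1_level (Suc 0) = carrier U1"
  unfolding U1_level_def by auto

lemma U1_level_subset_one:
  assumes "\<nexists>x y :: 'a. strict_chain x y k"
  shows "(U1_level k :: ('a::order \<Rightarrow> 'a \<Rightarrow> 'k::field) set) \<subseteq> {\<one>\<^bsub>U1\<^esub>}"
proof
  fix a :: "'a \<Rightarrow> 'a \<Rightarrow> 'k"
  assume a: "a \<in> U1_level k"
  have "a x y = fi_delta x y" for x y
  proof -
    consider "x = y" | "x < y" | "\<not> x \<le> y"
      using order.order_iff_strict by blast
    then show ?thesis
      by cases (use a assms FI_eq_0[of a x y] in \<open>auto simp: U1_level_def fi_delta_def\<close>)
  qed
  then show "a \<in> {\<one>\<^bsub>U1\<^esub>}" by auto
qed

lemma U1_level_subgroup: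
  assumes "0 < k"
  shows "subgroup (U1_level k :: ('a::order \<Rightarrow> 'a \<Rightarrow> 'k::field) set) U1"
proof (rule U1.subgroupI)
  show "U1_level k \<subseteq> carrier U1" "U1_level k \<noteq> {}"
    using U1.one_closed by (auto simp: U1_level_def fi_delta_def simp del: U1_carrier_iff)
next
  fix a b :: "'a \<Rightarrow> 'a \<Rightarrow> 'k"
  assume a: "a \<in> U1_level k" and b: "b \<in> U1_level k"
  have "strict_chain x y k" if "x < y" "fi_mult a b x y \<noteq> 0" for x y
  proof -
    obtain z where z: "x \<le> z" "z \<le> y" "a x z \<noteq> 0" "b z y \<noteq> 0"
      using \<open>fi_mult a b x y \<noteq> 0\<close> by (rule fi_mult_neq_0E)
    consider "z = x" | "z = y" | "x < z" "z < y"
      using z by (auto simp: order.order_iff_strict)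
    then show ?thesis
      by cases (use a b z that \<open>0 < k\<close> in \<open>auto simp: U1_level_def intro: strict_chain_join[of x z k y k]\<close>)
  qed
  with a b U1.m_closed[of a b] show "a \<otimes>\<^bsub>U1\<^esub> b \<in> U1_level k"
    by (auto simp: U1_level_def simp del: U1_carrier_iff)
next
  fix a :: "'a \<Rightarrow> 'a \<Rightarrow> 'k"
  assume a: "a \<in> U1_level k"
  then have "a \<in> carrier U1" by (simp add: U1_level_def)
  have "strict_chain x y k" if "x < y" "(inv\<^bsub>U1\<^esub> a) x y \<noteq> 0" for x y
    using U1.inv_closed[OF \<open>a \<in> carrier U1\<close>] \<open>a \<in> carrier U1\<close> _ _ that
  proof (rule U1_nonzero_entry_induct)
    fix x y assume "x < y" "fi_mult (inv\<^bsub>U1\<^esub> a) a x y \<noteq> a x y"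
    with a U1.l_inv[OF \<open>a \<in> carrier U1\<close>] less_imp_neq[of x y] show "strict_chain x y k"
      by (auto simp: U1_level_def fi_delta_def)
  next
    fix x z y assume "x < z" "z < y" "strict_chain x z k" "a z y \<noteq> 0"
    with a \<open>0 < k\<close> show "strict_chain x y k"
      by (auto simp: U1_level_def intro: strict_chain_join[of x z k y k])
  qed
  with U1.inv_closed[OF \<open>a \<in> carrier U1\<close>] show "inv\<^bsub>U1\<^esub> a \<in> U1_level k"
    by (auto simp: U1_level_def simp del: U1_carrier_iff)
qed

lemma U1_level_commute_entry:
  assumes a: "a \<in> U1_level i" and b: "b \<in> U1_level j" and "x < y"
    and "fi_mult a b x y \<noteq> fi_mult b a x y"
  shows "strict_chain x y (i + j)"
proof -
  have "a \<in> carrier U1" "b \<in> carrier U1"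
    using a b by (simp_all add: U1_level_def)
  then have "(\<Sum>z | x < z \<and> z < y \<and> a x z * b z y \<noteq> 0. a x z * b z y)
    \<noteq> (\<Sum>z | x < z \<and> z < y \<and> b x z * a z y \<noteq> 0. b x z * a z y)"
    using assms(4) by (simp add: U1_mult_entry[OF _ _ \<open>x < y\<close>] add.commute)
  then consider
      "(\<Sum>z | x < z \<and> z < y \<and> a x z * b z y \<noteq> 0. a x z * b z y) \<noteq> 0"
    | "(\<Sum>z | x < z \<and> z < y \<and> b x z * a z y \<noteq> 0. b x z * a z y) \<noteq> 0"
    by force
  then show ?thesis
  proof cases
    case 1
    then obtain z where "x < z" "z < y" "a x z \<noteq> 0" "b z y \<noteq> 0"
      by (rule sum.not_neutral_contains_not_neutral) auto
    with a b show ?thesis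
      by (auto simp: U1_level_def intro: strict_chain_add[of x z i y j])
  next
    case 2
    then obtain z where "x < z" "z < y" "b x z \<noteq> 0" "a z y \<noteq> 0"
      by (rule sum.not_neutral_contains_not_neutral) auto
    with a b have "strict_chain x y (j + i)"
      by (auto simp: U1_level_def intro: strict_chain_add[of x z j y i])
    then show ?thesis by (simp add: add.commute)
  qed
qed

lemma commutator_in_U1_level:
  fixes a b :: "'a::order \<Rightarrow> 'a \<Rightarrow> 'k::field"
  assumes a: "a \<in> U1_level i" and b: "b \<in> U1_level j" and "0 < i + j"
  shows "a \<otimes>\<^bsub>U1\<^esub> b \<otimes>\<^bsub>U1\<^esub> inv\<^bsub>U1\<^esub> a \<otimes>\<^bsub>U1\<^esub> inv\<^bsub>U1\<^esub> b \<in> U1_level (i + j)"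
    (is "?c \<in> _")
proof -
  have ac: "a \<in> carrier U1" and bc: "b \<in> carrier U1"
    using a b by (simp_all add: U1_level_def)
  then have c: "?c \<in> carrier U1" and ba: "b \<otimes>\<^bsub>U1\<^esub> a \<in> carrier U1"
    by (simp_all del: U1_carrier_iff U1_mult)
  have "inv\<^bsub>U1\<^esub> b \<otimes>\<^bsub>U1\<^esub> (b \<otimes>\<^bsub>U1\<^esub> a) = a"
    using ac bc by (simp add: U1.m_assoc[symmetric] del: U1_carrier_iff U1_mult U1_one)
  with ac bc have "?c \<otimes>\<^bsub>U1\<^esub> (b \<otimes>\<^bsub>U1\<^esub> a) = a \<otimes>\<^bsub>U1\<^esub> b"
    by (simp add: U1.m_assoc del: U1_carrier_iff U1_mult U1_one)
  then have cba: "fi_mult ?c (fi_mult b a) = fi_mult a b"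
    by simp
  have "strict_chain x y (i + j)" if "x < y" "?c x y \<noteq> 0" for x y
    using c ba _ _ that
  proof (rule U1_nonzero_entry_induct)
    fix x y assume "x < y" "fi_mult ?c (b \<otimes>\<^bsub>U1\<^esub> a) x y \<noteq> (b \<otimes>\<^bsub>U1\<^esub> a) x y"
    with cba show "strict_chain x y (i + j)"
      using U1_level_commute_entry[OF a b] by simp
  next
    fix x z y :: 'a assume "x < z" "z < y" "strict_chain x z (i + j)"
    with \<open>0 < i + j\<close> show "strict_chain x y (i + j)"
      by (intro strict_chain_join[of x z "i + j" y 1]) auto
  qed
  with c show ?thesis
    by (auto simp: U1_level_def simp del: U1_carrier_iff)
qed

lemma commutator_set_subset_U1_level:
  assumes "A \<subseteq> U1_level i" "B \<subseteq> U1_level j" "0 < i + j"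
  shows "(\<Union>h\<in>A. \<Union>g\<in>B. {h \<otimes>\<^bsub>U1\<^esub> g \<otimes>\<^bsub>U1\<^esub> inv\<^bsub>U1\<^esub> h \<otimes>\<^bsub>U1\<^esub> inv\<^bsub>U1\<^esub> g}) \<subseteq> U1_level (i + j)"
  using assms commutator_in_U1_level by blast

lemma lcs_U1_subset_level: "lcs (U1 :: ('a::order \<Rightarrow> 'a \<Rightarrow> 'k::field) monoid) n \<subseteq> U1_level (Suc n)"
proof (induction n)
  case 0
  show ?case by (simp add: U1_level_Suc_0)
next
  case (Suc n)
  have "subgroup (U1_level (Suc (Suc n)) :: ('a \<Rightarrow> 'a \<Rightarrow> 'k) set) U1"
    by (rule U1_level_subgroup) simp
  moreover have "(\<Union>h\<in>lcs (U1 :: ('a \<Rightarrow> 'a \<Rightarrow> 'k) monoid) n. \<Union>g\<in>carrier U1. {h \<otimes>\<^bsub>U1\<^esub> g \<otimes>\<^bsub>U1\<^esub> inv\<^bsub>U1\<^esub> h \<otimes>\<^bsub>U1\<^esub> inv\<^bsub>U1\<^esub> g})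
      \<subseteq> U1_level (Suc n + Suc 0)"
    using Suc.IH U1_level_Suc_0 by (intro commutator_set_subset_U1_level) auto
  ultimately show ?case
    by (simp add: U1.generate_subgroup_incl del: U1_mult)
qed

lemma derived_U1_subset_level:
  "(derived (U1 :: ('a::order \<Rightarrow> 'a \<Rightarrow> 'k::field) monoid) ^^ n) (carrier U1) \<subseteq> U1_level (2 ^ n)"
proof (induction n)
  case 0
  show ?case by (simp add: U1_level_Suc_0)
next
  case (Suc n)
  have "subgroup (U1_level (2 ^ Suc n) :: ('a \<Rightarrow> 'a \<Rightarrow> 'k) set) U1"
    by (rule U1_level_subgroup) simp
  moreover have "derived_set U1 ((derived (U1 :: ('a \<Rightarrow> 'a \<Rightarrow> 'k) monoid) ^^ n) (carrier U1)) \<subseteq> U1_level (2 ^ n + 2 ^ n)"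
    using Suc.IH by (intro commutator_set_subset_U1_level) auto
  ultimately show ?case
    unfolding funpow.simps(2) comp_apply derived_def[of U1 "(derived U1 ^^ n) (carrier U1)"]
    by (simp add: U1.generate_subgroup_incl mult_2 del: U1_mult)
qed

section \<open>Elementary transvections\<close>

definition transvection :: "'a::order \<Rightarrow> 'a \<Rightarrow> 'k::field \<Rightarrow> 'a \<Rightarrow> 'a \<Rightarrow> 'k" where
  "transvection x y c = (\<lambda>u v. if u = v then 1 else if u = x \<and> v = y then c else 0)"

lemma transvection_in_U1:
  assumes "x < y"
  shows "transvection x y c \<in> carrier U1"
proof -
  have "fi_support (transvection x y c) u v \<subseteq> {(x, y)}" for u v
    unfolding fi_support_def transvection_def by auto
  then have "finite (fi_support (transvection x y c) u v)" for u v
    by (rule finite_subset) simp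
  with assms show ?thesis
    by (auto simp: FI_iff transvection_def)
qed

lemma fi_mult_transvection:
  assumes "f \<in> FI" "x < y"
  shows "fi_mult f (transvection x y c) = (\<lambda>u v. f u v + (if v = y then f u x * c else 0))"
proof (intro ext)
  fix u v
  have "fi_mult f (transvection x y c) u v = (\<Sum>z\<in>{v, x}. f u z * transvection x y c z v)"
    using assms transvection_in_U1[OF \<open>x < y\<close>, of c]
    by (intro fi_mult_eq_sum) (auto simp: transvection_def split: if_splits)
  also have "\<dots> = f u v + (if v = y then f u x * c else 0)"
    using \<open>x < y\<close> by (cases "v = x") (auto simp: transvection_def)
  finally show "fi_mult f (transvection x y c) u v = f u v + (if v = y then f u x * c else 0)" .
qed

lemma inv_transvection:
  assumes "x < y"
  shows "inv\<^bsub>U1\<^esub> (transvection x y c) = transvection x y (- c)"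
proof (rule U1.inv_equality)
  show "transvection x y (- c) \<otimes>\<^bsub>U1\<^esub> transvection x y c = \<one>\<^bsub>U1\<^esub>"
    using assms transvection_in_U1[OF assms, of "- c"]
    by (simp add: fi_mult_transvection) (auto simp: fun_eq_iff fi_delta_def transvection_def)
qed (use transvection_in_U1[OF assms] in auto)

lemma commutator_transvection:
  fixes x y z :: "'a::order" and a b :: "'k::field"
  assumes "x < y" "y < z"
  shows "transvection x y a \<otimes>\<^bsub>U1\<^esub> transvection y z b
      \<otimes>\<^bsub>U1\<^esub> inv\<^bsub>U1\<^esub> (transvection x y a) \<otimes>\<^bsub>U1\<^esub> inv\<^bsub>U1\<^esub> (transvection y z b)
    = transvection x z (a * b)"
proof -
  have FI: "transvection u v c \<in> FI" if "u < v" for u v :: 'a and c :: 'k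
    using transvection_in_U1[OF that, of c] by simp
  define p where "p = fi_mult (transvection x y a) (transvection y z b)"
  define q where "q = fi_mult p (transvection x y (- a))"
  have "p \<in> FI" "q \<in> FI"
    using assms by (simp_all add: p_def q_def fi_mult_in_FI FI)
  have "fi_mult q (transvection y z (- b)) = transvection x z (a * b)"
    unfolding fi_mult_transvection[OF \<open>q \<in> FI\<close> assms(2)]
    unfolding q_def fi_mult_transvection[OF \<open>p \<in> FI\<close> assms(1)]
    unfolding p_def fi_mult_transvection[OF FI[OF assms(1)] assms(2)]
    using assms by (auto simp: transvection_def fun_eq_iff dest: less_trans)
  with assms show ?thesis
    by (simp add: inv_transvection p_def q_def)
qed

lemma transvection_neq_one: "x \<noteq> y \<Longrightarrow> c \<noteq> 0 \<Longrightarrow> transvection x y c \<noteq> \<one>\<^bsub>U1\<^esub>"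
  by (auto simp: transvection_def fi_delta_def fun_eq_iff)

lemma transvection_in_lcs:
  "strict_chain x y (Suc n) \<Longrightarrow> transvection x y c \<in> lcs U1 n"
proof (induction n arbitrary: y c)
  case 0
  then show ?case by (simp add: transvection_in_U1 del: U1_carrier_iff)
next
  case (Suc n)
  then have "strict_chain x y (Suc n + 1)" by simp
  then obtain w where w: "strict_chain x w (Suc n)" "strict_chain w y 1"
    by (rule strict_chain_addE)
  then have "w < y" by simp
  from w(1) have "x < w" by (rule strict_chain_Suc_imp_less)
  have "transvection x w c \<otimes>\<^bsub>U1\<^esub> transvection w y 1
      \<otimes>\<^bsub>U1\<^esub> inv\<^bsub>U1\<^esub> (transvection x w c) \<otimes>\<^bsub>U1\<^esub> inv\<^bsub>U1\<^esub> (transvection w y 1)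
    \<in> lcs U1 (Suc n)"
    unfolding lcs.simps using Suc.IH[OF w(1)] transvection_in_U1[OF \<open>w < y\<close>]
    by (blast intro: generate.incl)
  with \<open>x < w\<close> \<open>w < y\<close> show ?case
    by (simp only: commutator_transvection mult_1_right)
qed

lemma transvection_in_derived:
  "strict_chain x y (2 ^ n) \<Longrightarrow> transvection x y c \<in> (derived U1 ^^ n) (carrier U1)"
proof (induction n arbitrary: x y c)
  case 0
  then show ?case by (simp add: transvection_in_U1 del: U1_carrier_iff)
next
  case (Suc n)
  then have "strict_chain x y (2 ^ n + 2 ^ n)" by (simp add: mult_2)
  then obtain w where w: "strict_chain x w (2 ^ n)" "strict_chain w y (2 ^ n)"
    by (rule strict_chain_addE)
  then have "x < w" "w < y"
    by (simp_all add: strict_chain_imp_less)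
  have "transvection x w c \<otimes>\<^bsub>U1\<^esub> transvection w y 1
      \<otimes>\<^bsub>U1\<^esub> inv\<^bsub>U1\<^esub> (transvection x w c) \<otimes>\<^bsub>U1\<^esub> inv\<^bsub>U1\<^esub> (transvection w y 1)
    \<in> derived U1 ((derived U1 ^^ n) (carrier U1))"
    unfolding derived_def[of U1 "(derived U1 ^^ n) (carrier U1)"]
    by (rule generate.incl UN_I[OF Suc.IH[OF w(1), of c]] UN_I[OF Suc.IH[OF w(2), of 1]])+ simp
  with \<open>x < w\<close> \<open>w < y\<close> show ?case
    by (simp only: commutator_transvection mult_1_right funpow.simps(2) comp_apply)
qed

lemma eq_one_iff_no_strict_chain:
  fixes S :: "('a::order \<Rightarrow> 'a \<Rightarrow> 'k::field) set"
  assumes one: "\<one>\<^bsub>U1\<^esub> \<in> S" and level: "S \<subseteq> U1_level m" and "0 < m"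
    and transvections: "\<And>x y. strict_chain x y m \<Longrightarrow> transvection x y 1 \<in> S"
  shows "S = {\<one>\<^bsub>U1\<^esub>} \<longleftrightarrow> (\<nexists>x y :: 'a. strict_chain x y m)"
proof
  assume trivial: "S = {\<one>\<^bsub>U1\<^esub>}"
  show "\<nexists>x y :: 'a. strict_chain x y m"
  proof clarify
    fix x y :: 'a assume chain: "strict_chain x y m"
    with \<open>0 < m\<close> have "x \<noteq> y"
      using strict_chain_imp_less by fastforce
    with transvections[OF chain] trivial show False
      using transvection_neq_one[of x y "1 :: 'k"] by auto
  qed
next
  assume "\<nexists>x y :: 'a. strict_chain x y m"
  then show "S = {\<one>\<^bsub>U1\<^esub>}"
    using one level U1_level_subset_one by blast
qed

lemma lcs_U1_eq_one_iff:
  "lcs (U1 :: ('a::order \<Rightarrow> 'a \<Rightarrow> 'k::field) monoid) n = {\<one>\<^bsub>U1\<^esub>}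
    \<longleftrightarrow> poset_length (X :: 'a itself) \<le> enat n"
proof -
  have "lcs (U1 :: ('a \<Rightarrow> 'a \<Rightarrow> 'k) monoid) n = {\<one>\<^bsub>U1\<^esub>} \<longleftrightarrow> (\<nexists>x y :: 'a. strict_chain x y (Suc n))"
    by (rule eq_one_iff_no_strict_chain[OF U1.one_in_lcs lcs_U1_subset_level])
      (simp_all add: transvection_in_lcs)
  also have "\<dots> \<longleftrightarrow> \<not> enat (Suc n) \<le> poset_length X"
    by (simp only: enat_le_poset_length_iff)
  also have "\<dots> \<longleftrightarrow> poset_length X \<le> enat n"
    by (simp add: Suc_ile_eq not_less)
  finally show ?thesis .
qed

lemma derived_U1_eq_one_iff:
  "(derived (U1 :: ('a::order \<Rightarrow> 'a \<Rightarrow> 'k::field) monoid) ^^ n) (carrier U1) = {\<one>\<^bsub>U1\<^esub>}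
    \<longleftrightarrow> poset_length (X :: 'a itself) < enat (2 ^ n)"
proof -
  have "\<one>\<^bsub>U1\<^esub> \<in> (derived (U1 :: ('a \<Rightarrow> 'a \<Rightarrow> 'k) monoid) ^^ n) (carrier U1)"
    by (intro subgroup.one_closed U1.exp_of_derived_is_subgroup U1.subgroup_self)
  then have "(derived (U1 :: ('a \<Rightarrow> 'a \<Rightarrow> 'k) monoid) ^^ n) (carrier U1) = {\<one>\<^bsub>U1\<^esub>}
      \<longleftrightarrow> (\<nexists>x y :: 'a. strict_chain x y (2 ^ n))"
    by (rule eq_one_iff_no_strict_chain[OF _ derived_U1_subset_level])
      (simp_all add: transvection_in_derived)
  also have "\<dots> \<longleftrightarrow> \<not> enat (2 ^ n) \<le> poset_length X"
    by (simp only: enat_le_poset_length_iff)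
  also have "\<dots> \<longleftrightarrow> poset_length X < enat (2 ^ n)"
    by (simp add: not_le)
  finally show ?thesis .
qed

theorem corollary1p7:
  fixes X :: "'a::order itself" and K :: "'k::field itself"
  defines "G \<equiv> (U1 :: ('a \<Rightarrow> 'a \<Rightarrow> 'k) monoid)"
  shows "(solvable G \<longleftrightarrow> nilpotent_group G)
       \<and> (nilpotent_group G \<longleftrightarrow> poset_length X \<noteq> \<infinity>)
       \<and> (poset_length X \<noteq> \<infinity> \<longrightarrow>
            nilpotency_class G = the_enat (poset_length X)
          \<and> int (derived_length G) = \<lceil>log 2 (real (the_enat (poset_length X) + 1))\<rceil>)"
proof -
  have nilpotent: "nilpotent_group G \<longleftrightarrow> (\<exists>n. poset_length X \<le> enat n)"
    unfolding nilpotent_group_def G_def lcs_U1_eq_one_iff[where X = X] ..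
  have solvable: "solvable G \<longleftrightarrow> (\<exists>n. poset_length X < enat (2 ^ n))"
    unfolding G_def U1.solvable_iff_trivial_derived_seq derived_U1_eq_one_iff[where X = X] ..
  show ?thesis
  proof (cases "poset_length X")
    case (enat L)
    have "nilpotency_class G = L"
      unfolding nilpotency_class_def G_def lcs_U1_eq_one_iff[where X = X] enat
      by (rule Least_equality) auto
    moreover have "derived_length G = (LEAST n. L < 2 ^ n)"
      unfolding derived_length_def G_def derived_U1_eq_one_iff[where X = X] enat by simp
    moreover have "solvable G"
      unfolding solvable enat by (intro exI[of _ L]) (simp add: less_exp)
    moreover have "nilpotent_group G"
      unfolding nilpotent enat by auto
    ultimately show ?thesis
      using enat int_Least_less_power2_eq_ceiling_log[of L] by simp
  qed (simp add: nilpotent solvable)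
qed

end
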